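(* For all integers $m\ge 2$, $n\ge 2$ there exist a complete DFA $M$ with $m$ states and a complete DFA $N$ with $n$ states such that every DFA accepting $L(M)^R\cup L(N)$ has at least $2^m\cdot n-n+1$ states. In particular this holds for the following DFAs over $\Sigma=\{a,b,c,d\}$: $M=(\{0,\dots,m-1\},\Sigma,\delta_M,0,\{0\})$ with $\delta_M(0,a)=m-1$, $\delta_M(i,a)=i-1$ for $1\le i\le m-1$; $\delta_M(0,b)=1$, $\delta_M(i,b)=i$ for $1\le i\le m-1$; $\delta_M(0,c)=1$, $\delta_M(1,c)=0$, $\delta_M(j,c)=j$ for $2\le j\le m-1$; $\delta_M(i,d)=i$ for all $i$; and $N=(\{0,\dots,n-1\},\Sigma,\delta_N,0,\{0\})$ with $\delta_N(i,a)=\delta_N(i,b)=\delta_N(i,c)=i$ and $\delta_N(i,d)=i+1\bmod n$ for all $i$.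
   Context: DFAs are complete deterministic finite automata $(Q,\Sigma,\delta,s,F)$; $L(M)$ is the accepted language; $L^R=\{w^R: w\in L\}$ is the reversal of $L$. *)

theory Defs
  imports Main
begin

record ('s, 'a) dfa =
  states :: "'s set"
  alph   :: "'a set"
  trans  :: "'s \<Rightarrow> 'a \<Rightarrow> 's"
  start  :: 's
  final  :: "'s set"

definition is_dfa :: "('s, 'a) dfa \<Rightarrow> bool" where
  "is_dfa M \<longleftrightarrow> finite (states M) \<and> finite (alph M) \<and> start M \<in> states M
     \<and> final M \<subseteq> states M
     \<and> (\<forall>q\<in>states M. \<forall>x\<in>alph M. trans M q x \<in> states M)"

definition lang :: "('s, 'a) dfa \<Rightarrow> 'a list set" where
  "lang M = {w. set w \<subseteq> alph M \<and> foldl (trans M) (start M) w \<in> final M}"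

definition rev_lang :: "'a list set \<Rightarrow> 'a list set" where
  "rev_lang L = rev ` L"

datatype sym = a | b | c | d

definition sigma4 :: "sym set" where
  "sigma4 = {a, b, c, d}"

definition deltaM :: "nat \<Rightarrow> nat \<Rightarrow> sym \<Rightarrow> nat" where
  "deltaM m q x = (case x of
      a \<Rightarrow> (if q = 0 then m - 1 else q - 1)
    | b \<Rightarrow> (if q = 0 then 1 else q)
    | c \<Rightarrow> (if q = 0 then 1 else if q = 1 then 0 else q)
    | d \<Rightarrow> q)"

definition deltaN :: "nat \<Rightarrow> nat \<Rightarrow> sym \<Rightarrow> nat" where
  "deltaN n q x = (case x of d \<Rightarrow> (q + 1) mod n | _ \<Rightarrow> q)"

definition dfaM :: "nat \<Rightarrow> (nat, sym) dfa" where
  "dfaM m = \<lparr>states = {0..<m}, alph = sigma4, trans = deltaM m, start = 0, final = {0}\<rparr>"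

definition dfaN :: "nat \<Rightarrow> (nat, sym) dfa" where
  "dfaN n = \<lparr>states = {0..<n}, alph = sigma4, trans = deltaN n, start = 0, final = {0}\<rparr>"

text \<open>Every complete DFA over the alphabet of M accepting L(M)^R \<union> L(N) has at least k states.
  States of the competing DFA range over nat (any finite state set can be renamed into nat).\<close>
definition union_rev_lower_bound :: "(nat, sym) dfa \<Rightarrow> (nat, sym) dfa \<Rightarrow> nat \<Rightarrow> bool" where
  "union_rev_lower_bound M N k \<longleftrightarrow>
     (\<forall>A :: (nat, sym) dfa. is_dfa A \<and> alph A = alph M
        \<and> lang A = rev_lang (lang M) \<union> lang N \<longrightarrow> k \<le> card (states A))"

end

theory Submission
  imports Defs
begin

(* Proof idea (Myhill-Nerode).  For the witness automata M (m states) and N (n states)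
   of the theorem, a word u determines its residual in L = L(M)^R \<union> L(N) through
   (T, k): the set T of M-states from which rev u leads to the accepting state 0, and the
   number k mod n of letters d in u.  We show
   (1) every pair (T, k) with T \<subseteq> {0..<m}, k < n is realised by some u, because the
       letters a, b, c generate on M all transpositions of 0 with another state and all
       merges of another state into 0, so every set T occurs as a preimage of 0;
   (2) different pairs have different residuals, except that all pairs with T = {0..<m}
       coincide (every suffix is accepted), which leaves (2^m - 1) n + 1 classes. *)

(* The residual (left quotient) of L by u: the suffixes completing u to a word of L.
   By Myhill-Nerode, distinct residuals force distinct states in any DFA for L. *)
definition residual :: "'a list set \<Rightarrow> 'a list \<Rightarrow> 'a list set" where
  "residual L u = {z. u @ z \<in> L}"

lemma foldl_trans_in_states:
  "is_dfa A \<Longrightarrow> q \<in> states A \<Longrightarrow> set w \<subseteq> alph A \<Longrightarrow> foldl (trans A) q w \<in> states A"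
  by (induction w arbitrary: q) (auto simp: is_dfa_def)

lemma residual_lang:
  assumes "set u \<subseteq> alph A"
  shows "residual (lang A) u =
    {z. set z \<subseteq> alph A \<and> foldl (trans A) (foldl (trans A) (start A) u) z \<in> final A}"
  using assms by (auto simp: residual_def lang_def)

(* Myhill-Nerode lower bound: words with pairwise distinct residuals reach pairwise
   distinct states, so a DFA needs at least as many states as there are such words. *)
lemma card_le_states_if_residuals_distinct:
  assumes A: "is_dfa A" and words: "\<And>i. i \<in> I \<Longrightarrow> set (w i) \<subseteq> alph A"
    and distinct: "inj_on (\<lambda>i. residual (lang A) (w i)) I"
  shows "card I \<le> card (states A)"
proof -
  let ?reach = "\<lambda>i. foldl (trans A) (start A) (w i)"
  have "inj_on ?reach I"
  proof (rule inj_onI)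
    fix i j assume i: "i \<in> I" and j: "j \<in> I" and "?reach i = ?reach j"
    then have "residual (lang A) (w i) = residual (lang A) (w j)"
      by (simp add: residual_lang words)
    then show "i = j" using inj_onD[OF distinct _ i j] by blast
  qed
  moreover have "start A \<in> states A" using A by (simp add: is_dfa_def)
  then have "?reach ` I \<subseteq> states A"
    using foldl_trans_in_states[OF A] words by blast
  moreover have "finite (states A)" using A by (simp add: is_dfa_def)
  ultimately show ?thesis by (rule card_inj_on_le)
qed

lemma sigma4_UNIV: "sigma4 = UNIV"
proof -
  have "x \<in> sigma4" for x by (cases x) (auto simp: sigma4_def)
  then show ?thesis by auto
qed

lemma deltaM_less: "2 \<le> m \<Longrightarrow> q < m \<Longrightarrow> deltaM m q x < m"
  by (cases x) (auto simp: deltaM_def)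

lemma foldl_deltaM_less: "2 \<le> m \<Longrightarrow> q < m \<Longrightarrow> foldl (deltaM m) q w < m"
  by (induction w arbitrary: q) (auto simp: deltaM_less)

lemma deltaN_step: "q < n \<Longrightarrow> deltaN n q x = (q + (if x = d then 1 else 0)) mod n"
  by (cases x) (auto simp: deltaN_def)

lemma foldl_deltaN: "q < n \<Longrightarrow> foldl (deltaN n) q w = (q + count_list w d) mod n"
proof (induction w arbitrary: q)
  case (Cons x w)
  have "0 < n" using Cons.prems by simp
  then have "foldl (deltaN n) q (x # w) = ((q + (if x = d then 1 else 0)) mod n + count_list w d) mod n"
    using Cons by (simp add: deltaN_step)
  also have "\<dots> = (q + count_list (x # w) d) mod n"
    by (simp add: mod_add_left_eq add.assoc)
  finally show ?case .
qed simp

lemma is_dfa_dfaM: "2 \<le> m \<Longrightarrow> is_dfa (dfaM m)"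
  by (auto simp: is_dfa_def dfaM_def sigma4_def deltaM_less)

lemma is_dfa_dfaN: "0 < n \<Longrightarrow> is_dfa (dfaN n)"
  by (auto simp: is_dfa_def dfaN_def sigma4_def deltaN_step)

lemma lang_dfaM: "w \<in> lang (dfaM m) \<longleftrightarrow> foldl (deltaM m) 0 w = 0"
  by (simp add: lang_def dfaM_def sigma4_UNIV)

lemma lang_dfaN: "0 < n \<Longrightarrow> w \<in> lang (dfaN n) \<longleftrightarrow> count_list w d mod n = 0"
  by (simp add: lang_def dfaN_def sigma4_UNIV foldl_deltaN)

lemma mem_rev_lang: "u \<in> rev_lang L \<longleftrightarrow> rev u \<in> L"
  unfolding rev_lang_def by (metis image_iff rev_rev_ident)

lemma foldl_replicate: "foldl f q (replicate k x) = ((\<lambda>p. f p x) ^^ k) q"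
  by (induction k arbitrary: q) (simp_all add: funpow_Suc_right del: funpow.simps)

lemma foldl_concat_replicate: "foldl f q (concat (replicate k w)) = ((\<lambda>p. foldl f p w) ^^ k) q"
  by (induction k arbitrary: q) (simp_all add: funpow_Suc_right del: funpow.simps)

lemma funpow_decrement:
  assumes "\<And>q. lo < q \<Longrightarrow> f q = q - 1"
  shows "k + lo \<le> p \<Longrightarrow> (f ^^ k) p = p - k"
  by (induction k) (simp_all add: assms)

(* The word ca fixes 0 and cyclically rotates 1 -> m-1 -> m-2 -> ... -> 1. *)
definition rot :: "nat \<Rightarrow> nat \<Rightarrow> nat" where
  "rot m q = (if q = 0 then 0 else if q = 1 then m - 1 else q - 1)"

lemma foldl_ca: "(\<lambda>p. foldl (deltaM m) p [c, a]) = rot m"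
  by (auto simp: deltaM_def rot_def)

lemma rot_funpow_zero: "(rot m ^^ k) 0 = 0"
  by (induction k) (simp_all add: rot_def)

lemma rot_funpow_down: "k + 1 \<le> p \<Longrightarrow> (rot m ^^ k) p = p - k"
  by (rule funpow_decrement[where lo = 1]) (auto simp: rot_def)

lemma rot_cycle:
  assumes "1 \<le> p" "p < m"
  shows "(rot m ^^ (m - 1)) p = p"
proof -
  have "m - 1 = (m - 1 - p) + Suc (p - 1)" using assms by simp
  then have "rot m ^^ (m - 1) = rot m ^^ (m - 1 - p) \<circ> (rot m \<circ> rot m ^^ (p - 1))"
    by (metis funpow_add funpow.simps(2))
  then have "(rot m ^^ (m - 1)) p = (rot m ^^ (m - 1 - p)) (rot m ((rot m ^^ (p - 1)) p))"
    by simp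
  also have "\<dots> = (rot m ^^ (m - 1 - p)) (m - 1)"
    using assms by (simp add: rot_funpow_down rot_def)
  also have "\<dots> = p" using assms by (simp add: rot_funpow_down)
  finally show ?thesis .
qed

(* Conjugating w by a power of the rotation moves the action of w from state 1 to
   state x: the prefix brings x to 1, the suffix carries 1 back to x. *)
definition conj_word :: "nat \<Rightarrow> nat \<Rightarrow> sym list \<Rightarrow> sym list" where
  "conj_word m x w = concat (replicate (x - 1) [c, a]) @ w @ concat (replicate (m - x) [c, a])"

lemma foldl_conj_word:
  fixes m x :: nat and w :: "sym list"
  defines "g \<equiv> foldl (deltaM m)"
  assumes x: "1 \<le> x" "x < m"
    and fixes_high: "\<And>q. 2 \<le> q \<Longrightarrow> g q w = q"
    and low: "g 0 w \<le> 1" "g 1 w \<le> 1"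
  shows "g 0 (conj_word m x w) = (if g 0 w = 0 then 0 else x)"
    and "g x (conj_word m x w) = (if g 1 w = 0 then 0 else x)"
    and "p < m \<Longrightarrow> p \<noteq> 0 \<Longrightarrow> p \<noteq> x \<Longrightarrow> g p (conj_word m x w) = p"
proof -
  let ?R = "rot m"
  have run: "g p (conj_word m x w) = (?R ^^ (m - x)) (g ((?R ^^ (x - 1)) p) w)" for p
    unfolding g_def conj_word_def foldl_append foldl_concat_replicate foldl_ca by (rule refl)
  have round_trip: "(?R ^^ (m - x)) ((?R ^^ (x - 1)) q) = q" if "1 \<le> q" "q < m" for q
  proof -
    have "m - 1 = (m - x) + (x - 1)" using x by simp
    then show ?thesis using rot_cycle[OF that] by (metis funpow_add comp_apply)
  qed
  have x_to_1: "(?R ^^ (x - 1)) x = 1" using x by (simp add: rot_funpow_down)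
  have relabel: "(?R ^^ (m - x)) y = (if y = 0 then 0 else x)" if "y \<le> 1" for y
    using that round_trip[OF x] x_to_1 rot_funpow_zero by (cases y) auto
  show "g 0 (conj_word m x w) = (if g 0 w = 0 then 0 else x)"
    using run relabel low(1) by (simp add: rot_funpow_zero)
  show "g x (conj_word m x w) = (if g 1 w = 0 then 0 else x)"
    using run relabel low(2) x_to_1 by simp
  assume p: "p < m" "p \<noteq> 0" "p \<noteq> x"
  let ?q = "(?R ^^ (x - 1)) p"
  have "?q \<noteq> 0"
  proof
    assume "?q = 0"
    then have "p = (?R ^^ (m - x)) 0" using round_trip[of p] p by simp
    then show False using p rot_funpow_zero by simp
  qed
  moreover have "?q \<noteq> 1" using round_trip[of p] round_trip[OF x] x_to_1 p by fastforce
  ultimately show "g p (conj_word m x w) = p"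
    using run fixes_high round_trip[of p] p by simp
qed

(* cbc merges 1 into 0, so its conjugate merges x into 0 and fixes everything else. *)
lemma foldl_collapse_word:
  assumes "1 \<le> x" "x < m" "p < m"
  shows "foldl (deltaM m) p (conj_word m x [c, b, c]) = (if p = x then 0 else p)"
proof -
  have w: "foldl (deltaM m) 0 [c, b, c] = 0" "foldl (deltaM m) 1 [c, b, c] = 0"
    "\<And>q. 2 \<le> q \<Longrightarrow> foldl (deltaM m) q [c, b, c] = q"
    by (simp_all add: deltaM_def)
  show ?thesis
    using foldl_conj_word[of x m "[c, b, c]", OF assms(1,2) w(3)] w(1,2) assms(3)
    by (cases "p = 0 \<or> p = x") auto
qed

(* c swaps 0 and 1, so its conjugate is the transposition of 0 and x. *)
lemma foldl_swap_word:
  assumes "1 \<le> x" "x < m" "p < m"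
  shows "foldl (deltaM m) p (conj_word m x [c]) = (if p = 0 then x else if p = x then 0 else p)"
proof -
  have w: "foldl (deltaM m) 0 [c] = 1" "foldl (deltaM m) 1 [c] = 0"
    "\<And>q. 2 \<le> q \<Longrightarrow> foldl (deltaM m) q [c] = q"
    by (simp_all add: deltaM_def)
  show ?thesis
    using foldl_conj_word[of x m "[c]", OF assms(1,2) w(3)] w(1,2) assms
    by (cases "p = 0 \<or> p = x") auto
qed

(* Composing merges: for X of nonzero states, some d-free word sends exactly the
   states of {0} \<union> X to 0. *)
lemma selector_word_with_zero:
  assumes "finite X" "X \<subseteq> {1..<m}"
  shows "\<exists>v. d \<notin> set v \<and> (\<forall>p<m. foldl (deltaM m) p v = 0 \<longleftrightarrow> p \<in> insert 0 X)"
  using assms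
proof (induction X rule: finite_induct)
  case empty
  show ?case by (rule exI[of _ "[]"]) simp
next
  case (insert x X)
  then obtain v where v: "d \<notin> set v" "\<forall>p<m. foldl (deltaM m) p v = 0 \<longleftrightarrow> p \<in> insert 0 X"
    by auto
  have x: "1 \<le> x" "x < m" using insert.prems by auto
  have "foldl (deltaM m) p (conj_word m x [c, b, c] @ v) = 0 \<longleftrightarrow> p \<in> insert 0 (insert x X)"
    if p: "p < m" for p
  proof -
    have "foldl (deltaM m) p (conj_word m x [c, b, c] @ v) = foldl (deltaM m) (if p = x then 0 else p) v"
      using foldl_collapse_word[OF x p] by simp
    then show ?thesis using v(2) p x by auto
  qed
  moreover have "d \<notin> set (conj_word m x [c, b, c] @ v)" using v(1) by (simp add: conj_word_def)
  ultimately show ?case by blast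
qed

(* Every set T of states of M is the exact preimage of 0 under some d-free word:
   b avoids 0 entirely (T empty); otherwise a transposition moves some j \<in> T to 0. *)
lemma selector_word:
  assumes T: "T \<subseteq> {0..<m}"
  shows "\<exists>v. d \<notin> set v \<and> (\<forall>p<m. foldl (deltaM m) p v = 0 \<longleftrightarrow> p \<in> T)"
proof (cases "0 \<in> T")
  case True
  have sub: "T - {0} \<subseteq> {1..<m}" using T by auto
  moreover have "finite (T - {0})" using sub by (rule finite_subset) simp
  moreover have "insert 0 (T - {0}) = T" using True by blast
  ultimately show ?thesis using selector_word_with_zero[of "T - {0}" m] by simp
next
  case zero_notin: False
  show ?thesis
  proof (cases "T = {}")
    case True
    have "foldl (deltaM m) p [b] \<noteq> 0" for p by (simp add: deltaM_def)
    then show ?thesis using True by (intro exI[of _ "[b]"]) simp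
  next
    case False
    then obtain j where "j \<in> T" by blast
    have T_pos: "T \<subseteq> {1..<m}"
      using T zero_notin by (metis atLeastLessThan_iff less_one subset_eq linorder_not_less)
    then have j: "1 \<le> j" "j < m" using \<open>j \<in> T\<close> by auto
    have sub: "T - {j} \<subseteq> {1..<m}" using T_pos by blast
    moreover have "finite (T - {j})" using sub by (rule finite_subset) simp
    ultimately obtain v where v: "d \<notin> set v"
      "\<forall>p<m. foldl (deltaM m) p v = 0 \<longleftrightarrow> p \<in> insert 0 (T - {j})"
      using selector_word_with_zero by blast
    have "foldl (deltaM m) p (conj_word m j [c] @ v) = 0 \<longleftrightarrow> p \<in> T" if p: "p < m" for p
    proof -
      have "foldl (deltaM m) p (conj_word m j [c] @ v)
          = foldl (deltaM m) (if p = 0 then j else if p = j then 0 else p) v"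
        using foldl_swap_word[OF j p] by simp
      then show ?thesis using v(2) p j \<open>j \<in> T\<close> zero_notin by auto
    qed
    moreover have "d \<notin> set (conj_word m j [c] @ v)" using v(1) by (simp add: conj_word_def)
    ultimately show ?thesis by blast
  qed
qed

(* a^(m-q) leads from 0 to q: the first a goes to m-1, the others decrement. *)
lemma reach_word:
  assumes "2 \<le> m" "q < m"
  shows "foldl (deltaM m) 0 (replicate (m - q) a) = q"
proof -
  have "m - q = Suc (m - 1 - q)" using assms by simp
  then have "replicate (m - q) a = a # replicate (m - 1 - q) a" by simp
  moreover have "deltaM m 0 a = m - 1" by (simp add: deltaM_def)
  moreover have "((\<lambda>p. deltaM m p a) ^^ (m - 1 - q)) (m - 1) = q"
    using funpow_decrement[where lo = 0 and f = "\<lambda>p. deltaM m p a"] assms by (simp add: deltaM_def)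
  ultimately show ?thesis by (simp add: foldl_replicate)
qed

lemma foldl_deltaM_d: "foldl (deltaM m) p (replicate k d) = p"
  by (induction k) (simp_all add: deltaM_def)

lemma count_list_replicate_self: "count_list (replicate k x) x = k"
  by (induction k) simp_all

(* The candidate residuals of L = rev_lang (lang M) \<union> lang N: a suffix z completes the
   prefix iff reading z backwards in M from 0 lands in T, or the d-count reaches 0 mod n.
   Here T is the set of M-states from which the reversed prefix leads to 0, and k its
   d-count. *)
definition suffix_lang :: "nat \<Rightarrow> nat \<Rightarrow> nat set \<Rightarrow> nat \<Rightarrow> sym list set" where
  "suffix_lang m n T k = {z. foldl (deltaM m) 0 (rev z) \<in> T \<or> (k + count_list z d) mod n = 0}"

(* Every pair (T, k) is realised: the prefix rev (d^k @ v), with v selecting T. *)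
lemma residual_eq_suffix_lang:
  assumes m: "2 \<le> m" and n: "0 < n" and T: "T \<subseteq> {0..<m}"
  shows "\<exists>u. residual (rev_lang (lang (dfaM m)) \<union> lang (dfaN n)) u = suffix_lang m n T k"
proof -
  obtain v where v: "d \<notin> set v" "\<forall>p<m. foldl (deltaM m) p v = 0 \<longleftrightarrow> p \<in> T"
    using selector_word[OF T] by blast
  let ?u = "rev (replicate k d @ v)"
  have in_rev_M: "?u @ z \<in> rev_lang (lang (dfaM m)) \<longleftrightarrow> foldl (deltaM m) 0 (rev z) \<in> T" for z
  proof -
    have "foldl (deltaM m) 0 (rev (?u @ z)) = foldl (deltaM m) (foldl (deltaM m) 0 (rev z)) v"
      by (simp add: foldl_deltaM_d)
    then show ?thesis
      using v(2) foldl_deltaM_less[OF m, of 0 "rev z"] m by (simp add: mem_rev_lang lang_dfaM)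
  qed
  have in_N: "?u @ z \<in> lang (dfaN n) \<longleftrightarrow> (k + count_list z d) mod n = 0" for z
    using v(1) n by (simp add: lang_dfaN count_list_replicate_self)
  have "residual (rev_lang (lang (dfaM m)) \<union> lang (dfaN n)) ?u = suffix_lang m n T k"
    by (rule set_eqI) (simp only: residual_def suffix_lang_def mem_Collect_eq Un_iff in_rev_M in_N)
  then show ?thesis ..
qed

lemma probe_suffix_lang:
  assumes "2 \<le> m" "q < m"
  shows "replicate s d @ replicate (m - q) a \<in> suffix_lang m n T k \<longleftrightarrow> q \<in> T \<or> (k + s) mod n = 0"
  using reach_word[OF assms] by (simp add: suffix_lang_def foldl_deltaM_d count_list_replicate_self)

(* The pairs (T, k) with distinct residuals: when T is all of M's states every suffix
   is accepted regardless of k, so only one such pair is kept. *)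
definition state_pairs :: "nat \<Rightarrow> nat \<Rightarrow> (nat set \<times> nat) set" where
  "state_pairs m n = (Pow {0..<m} - {{0..<m}}) \<times> {..<n} \<union> {({0..<m}, 0)}"

lemma card_state_pairs: "card (state_pairs m n) = 2 ^ m * n - n + 1"
proof -
  have "card (Pow {0..<m} - {{0..<m::nat}}) = 2 ^ m - 1"
    by (simp add: card_Diff_singleton card_Pow)
  then have "card (state_pairs m n) = (2 ^ m - 1) * n + 1"
    by (simp add: state_pairs_def card_cartesian_product)
  then show ?thesis by (simp add: diff_mult_distrib)
qed

(* Distinct pairs give distinct residuals: with the counter forced to 1 the probes
   recover T; then, for T not full, a state outside T exposes the counter k. *)
lemma suffix_lang_inj_on:
  assumes m: "2 \<le> m" and n: "2 \<le> n"
  shows "inj_on (\<lambda>(T, k). suffix_lang m n T k) (state_pairs m n)"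
proof (rule inj_onI, clarsimp)
  fix T k T' k'
  assume i: "(T, k) \<in> state_pairs m n" and j: "(T', k') \<in> state_pairs m n"
    and eq: "suffix_lang m n T k = suffix_lang m n T' k'"
  have probe: "(q \<in> T \<or> (k + s) mod n = 0) \<longleftrightarrow> (q \<in> T' \<or> (k' + s) mod n = 0)" if "q < m" for q s
    using probe_suffix_lang[OF m that] eq by metis
  have T: "T \<subseteq> {0..<m}" "k < n" "T = {0..<m} \<Longrightarrow> k = 0"
    and T': "T' \<subseteq> {0..<m}" "k' < n" "T' = {0..<m} \<Longrightarrow> k' = 0"
    using i j n by (auto simp: state_pairs_def)
  have one: "(j + (n - j + 1)) mod n = 1" if "j < n" for j
    using that n by (simp add: mod_Suc)
  have "q \<in> T'" if "q \<in> T" for q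
    using probe[of q "n - k' + 1"] that T(1) one[OF T'(2)] by auto
  moreover have "q \<in> T" if "q \<in> T'" for q
    using probe[of q "n - k + 1"] that T'(1) one[OF T(2)] by auto
  ultimately have TT: "T = T'" by blast
  show "T = T' \<and> k = k'"
  proof (rule ccontr)
    assume "\<not> (T = T' \<and> k = k')"
    then have "k \<noteq> k'" using TT by blast
    then have "T \<noteq> {0..<m}" using T(3) T'(3) TT by auto
    then obtain q where q: "q < m" "q \<notin> T" using T(1) by (meson atLeastLessThan_iff subset_antisym subsetI)
    have "(k' + (n - k)) mod n \<noteq> 0"
      using T(2) T'(2) \<open>k \<noteq> k'\<close> by (auto simp: mod_if)
    then show False using probe[OF q(1), of "n - k"] q(2) TT T(2) by simp
  qed
qed

lemma dfaM_dfaN_lower_bound: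
  assumes m: "2 \<le> m" and n: "2 \<le> n"
  shows "union_rev_lower_bound (dfaM m) (dfaN n) (2 ^ m * n - n + 1)"
  unfolding union_rev_lower_bound_def
proof (intro allI impI, elim conjE)
  fix A :: "(nat, sym) dfa"
  assume A: "is_dfa A" and alph: "alph A = alph (dfaM m)"
    and L: "lang A = rev_lang (lang (dfaM m)) \<union> lang (dfaN n)"
  have "\<forall>i\<in>state_pairs m n. \<exists>u. residual (lang A) u = suffix_lang m n (fst i) (snd i)"
    unfolding L using residual_eq_suffix_lang[OF m] n by (force simp: state_pairs_def)
  then obtain w where w: "\<forall>i\<in>state_pairs m n. residual (lang A) (w i) = suffix_lang m n (fst i) (snd i)"
    by (rule bchoice[THEN exE])
  have distinct: "inj_on (\<lambda>i. residual (lang A) (w i)) (state_pairs m n)"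
    using suffix_lang_inj_on[OF m n] w by (simp add: inj_on_def split_beta)
  have words: "set (w i) \<subseteq> alph A" for i
    using alph by (simp add: dfaM_def sigma4_UNIV)
  have "card (state_pairs m n) \<le> card (states A)"
    by (rule card_le_states_if_residuals_distinct[OF A words distinct])
  then show "2 ^ m * n - n + 1 \<le> card (states A)" by (simp add: card_state_pairs)
qed

theorem theorem8:
  fixes m n :: nat
  assumes "m \<ge> 2" and "n \<ge> 2"
  shows "(\<exists>M N :: (nat, sym) dfa. is_dfa M \<and> is_dfa N \<and> alph M = alph N
            \<and> card (states M) = m \<and> card (states N) = n
            \<and> union_rev_lower_bound M N (2 ^ m * n - n + 1))
       \<and> (is_dfa (dfaM m) \<and> is_dfa (dfaN n)
            \<and> union_rev_lower_bound (dfaM m) (dfaN n) (2 ^ m * n - n + 1))"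
proof -
  have dfas: "is_dfa (dfaM m)" "is_dfa (dfaN n)"
    using assms is_dfa_dfaM is_dfa_dfaN by auto
  have shape: "alph (dfaM m) = alph (dfaN n)" "card (states (dfaM m)) = m" "card (states (dfaN n)) = n"
    by (simp_all add: dfaM_def dfaN_def)
  have bound: "union_rev_lower_bound (dfaM m) (dfaN n) (2 ^ m * n - n + 1)"
    using dfaM_dfaN_lower_bound assms by simp
  show ?thesis using dfas shape bound by blast
qed

end
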